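(* Let $m\ge 3$ and let $C_1,\dots,C_m\subset\mathbb{R}^n$ be nonempty, closed, convex sets in general position, $C=C_1\times\cdots\times C_m$, and $D(x)=\sum_{i=1}^m\|x_i-x_{i+1}\|$ with $x_{m+1}=x_1$. Then $$\inf_{x\in C}D(x)=\inf\{D(x_1,\dots,x_m): x_i\in\operatorname{bd}(C_i),\ 1\le i\le m\},$$ and every minimizer $x^*=(x_1^*,\dots,x_m^* )$ of $D$ over $C$ satisfies $x_i^*\in\operatorname{bd}(C_i)$ for all $i$.
   Context: The family $C_1,\dots,C_m$ is in general position if for every $i$, $C_i\cap\operatorname{conv}\big(\bigcup_{j\ne i}C_j\big)=\varnothing$. $\operatorname{bd}$ denotes the boundary in $\mathbb{R}^n$. *)

theory Defs
  imports "HOL-Analysis.Analysis"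
begin

text \<open>Sets C 0, ..., C (m-1) (0-based indexing of C_1..C_m).
  General position: each C i is disjoint from the convex hull of the union of the others.\<close>
definition general_position :: "nat \<Rightarrow> (nat \<Rightarrow> 'a::real_vector set) \<Rightarrow> bool" where
  "general_position m C \<longleftrightarrow>
     (\<forall>i<m. C i \<inter> convex hull (\<Union>j\<in>{..<m} - {i}. C j) = {})"

definition cyc_len :: "nat \<Rightarrow> (nat \<Rightarrow> 'a::real_normed_vector) \<Rightarrow> real" where
  "cyc_len m x = (\<Sum>i<m. norm (x i - x (Suc i mod m)))"

end

theory Submission
  imports Defs
begin

text \<open>Replacing one vertex x_i by a point w changes D only through
  |x_{i-1} - w| + |w - x_{i+1}|, and for w on the segment from x_i to x_{i-1} this is at most
  its value at x_i, by the triangle inequality. By general position x_{i-1} is not in C_i, so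
  that segment meets bd C_i; treating the vertices in turn moves all of them to the boundaries
  without increasing D. Conversely, if a minimizer had x_i in the interior of C_i, then x_i would
  minimize the convex function w \<mapsto> |x_{i-1} - w| + |w - x_{i+1}| locally, hence globally, so
  x_i would lie on the segment [x_{i-1}, x_{i+1}], which general position keeps away from C_i.\<close>

lemma dist_add_dist_le_closed_segment:
  fixes a b y z :: "'a::euclidean_space"
  assumes "z \<in> closed_segment y a"
  shows "dist a z + dist z b \<le> dist a y + dist y b"
proof -
  have "dist a y = dist a z + dist z y"
    using assms by (simp add: between_mem_segment [symmetric] between dist_commute)
  moreover have "dist z b \<le> dist z y + dist y b"
    by (rule dist_triangle)
  ultimately show ?thesis
    by linarith
qed

lemma interior_minimizer_dist_add_dist_in_closed_segment:
  fixes a b y :: "'a::euclidean_space"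
  assumes "y \<in> interior S"
    and "\<And>w. w \<in> S \<Longrightarrow> dist a y + dist y b \<le> dist a w + dist w b"
  shows "y \<in> closed_segment a b"
proof -
  obtain e where "e > 0" "ball y e \<subseteq> S"
    using assms(1) mem_interior by blast
  moreover have "convex_on UNIV (\<lambda>w. dist a w + dist w b)"
    by (simp add: convex_on_add convex_on_dist dist_commute [of _ b])
  ultimately have "dist a y + dist y b \<le> dist a a + dist a b"
    using assms(2) convex_local_global_minimum [of e UNIV "\<lambda>w. dist a w + dist w b" y]
    by blast
  then have "dist a b = dist a y + dist y b"
    using dist_triangle [of a b y] by simp
  then show ?thesis
    by (simp add: between_mem_segment [symmetric] between)
qed

lemma Suc_mod_eq_iff_eq_pred_mod:
  fixes m i k :: nat
  assumes "i < m" "k < m"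
  shows "Suc k mod m = i \<longleftrightarrow> k = (i + m - 1) mod m"
  using assms by (cases "Suc k = m"; cases i) (auto simp: mod_if)

lemma cyc_len_fun_upd:
  assumes "2 \<le> m" "i < m"
  defines "p \<equiv> (i + m - 1) mod m" and "s \<equiv> Suc i mod m"
  shows "cyc_len m (x(i := w)) + dist (x p) (x i) + dist (x i) (x s)
         = cyc_len m x + dist (x p) w + dist w (x s)"
proof -
  have "s \<noteq> i"
    using assms(1,2) by (auto simp: s_def mod_if)
  have "p < m"
    using assms(2) by (simp add: p_def)
  then have "Suc p mod m = i"
    using assms(2) Suc_mod_eq_iff_eq_pred_mod [of i m p] by (simp add: p_def)
  then have p: "p < m" "p \<noteq> i" "Suc p mod m = i"
    using \<open>p < m\<close> \<open>s \<noteq> i\<close> by (auto simp: s_def)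
  define edge where "edge y k = dist (y k) (y (Suc k mod m))" for y :: "nat \<Rightarrow> 'a" and k
  have decompose: "cyc_len m y = edge y p + edge y i + (\<Sum>k\<in>{..<m} - {p, i}. edge y k)" for y
    using p assms(2) sum.subset_diff [of "{p, i}" "{..<m}" "edge y"]
    by (simp add: cyc_len_def edge_def dist_norm add.commute)
  have "edge (x(i := w)) k = edge x k" if "k \<in> {..<m} - {p, i}" for k
    using that assms(2) Suc_mod_eq_iff_eq_pred_mod [of i m k] by (auto simp: edge_def p_def)
  then have "(\<Sum>k\<in>{..<m} - {p, i}. edge (x(i := w)) k) = (\<Sum>k\<in>{..<m} - {p, i}. edge x k)"
    by (rule sum.cong [OF refl])
  then show ?thesis
    using decompose [of x] decompose [of "x(i := w)"] p \<open>s \<noteq> i\<close> by (simp add: edge_def s_def)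
qed

lemma cyc_len_nonneg: "0 \<le> cyc_len m x"
  by (simp add: cyc_len_def sum_nonneg)

lemma general_position_closed_segment_disjoint:
  assumes "general_position m C" "i < m"
    and "j < m" "j \<noteq> i" "a \<in> C j" and "k < m" "k \<noteq> i" "b \<in> C k"
  shows "closed_segment a b \<inter> C i = {}"
proof -
  have "closed_segment a b \<subseteq> convex hull (\<Union>l\<in>{..<m} - {i}. C l)"
    unfolding segment_convex_hull using assms(3-8) by (intro hull_mono) auto
  then show ?thesis
    using assms(1,2) unfolding general_position_def by blast
qed

lemma exists_frontier_fun_upd_cyc_len_le:
  fixes C :: "nat \<Rightarrow> 'a::euclidean_space set"
  assumes "2 \<le> m" "general_position m C" "\<forall>j<m. y j \<in> C j" "i < m"
  shows "\<exists>z\<in>frontier (C i). cyc_len m (y(i := z)) \<le> cyc_len m y"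
proof -
  define p where "p = (i + m - 1) mod m"
  define s where "s = Suc i mod m"
  have "p < m" "p \<noteq> i"
    using assms(1,4) Suc_mod_eq_iff_eq_pred_mod [of i m i] by (auto simp: p_def mod_if)
  then have "y p \<notin> C i"
    using general_position_closed_segment_disjoint [OF assms(2,4), of p "y p" p "y p"] assms(3)
    by auto
  then obtain z where z: "z \<in> closed_segment (y i) (y p)" "z \<in> frontier (C i)"
    using connected_Int_frontier [of "closed_segment (y i) (y p)" "C i"] assms(3,4) by auto
  have "dist (y p) z + dist z (y s) \<le> dist (y p) (y i) + dist (y i) (y s)"
    using z(1) by (rule dist_add_dist_le_closed_segment)
  then show ?thesis
    using z(2) cyc_len_fun_upd [OF assms(1,4), of y z] unfolding p_def s_def by force
qed

lemma exists_frontier_config_cyc_len_le: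
  fixes C :: "nat \<Rightarrow> 'a::euclidean_space set"
  assumes "2 \<le> m" "general_position m C" "\<And>i. i < m \<Longrightarrow> closed (C i)" "\<forall>i<m. x i \<in> C i"
  shows "\<exists>y. (\<forall>i<m. y i \<in> frontier (C i)) \<and> cyc_len m y \<le> cyc_len m x"
proof -
  have "\<exists>y. (\<forall>i<m. y i \<in> C i) \<and> (\<forall>i<n. y i \<in> frontier (C i)) \<and> cyc_len m y \<le> cyc_len m x"
    if "n \<le> m" for n
    using that
  proof (induction n)
    case 0
    then show ?case
      using assms(4) by blast
  next
    case (Suc n)
    then obtain y where y: "\<forall>i<m. y i \<in> C i" "\<forall>i<n. y i \<in> frontier (C i)"
        "cyc_len m y \<le> cyc_len m x"
      by auto
    have "n < m"
      using Suc.prems by simp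
    then obtain z where z: "z \<in> frontier (C n)" "cyc_len m (y(n := z)) \<le> cyc_len m y"
      using exists_frontier_fun_upd_cyc_len_le [OF assms(1,2) y(1)] by blast
    then have "z \<in> C n"
      using \<open>n < m\<close> assms(3) frontier_subset_closed by blast
    show ?case
    proof (intro exI conjI)
      show "\<forall>i<m. (y(n := z)) i \<in> C i"
        using y(1) \<open>z \<in> C n\<close> by simp
      show "\<forall>i<Suc n. (y(n := z)) i \<in> frontier (C i)"
        using y(2) z(1) by (simp add: less_Suc_eq)
      show "cyc_len m (y(n := z)) \<le> cyc_len m x"
        using y(3) z(2) by linarith
    qed
  qed
  then show ?thesis
    by blast
qed

lemma cyc_len_minimizer_in_frontier:
  fixes C :: "nat \<Rightarrow> 'a::euclidean_space set"
  assumes "2 \<le> m" "general_position m C" "\<forall>j<m. x j \<in> C j"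
    and "\<And>y. \<forall>j<m. y j \<in> C j \<Longrightarrow> cyc_len m x \<le> cyc_len m y" "i < m"
  shows "x i \<in> frontier (C i)"
proof (rule ccontr)
  assume "x i \<notin> frontier (C i)"
  then have interior: "x i \<in> interior (C i)"
    using assms(3,5) closure_subset by (fastforce simp: frontier_def)
  define p where "p = (i + m - 1) mod m"
  define s where "s = Suc i mod m"
  have "dist (x p) (x i) + dist (x i) (x s) \<le> dist (x p) w + dist w (x s)" if "w \<in> C i" for w
    using assms(4) [of "x(i := w)"] assms(3) that cyc_len_fun_upd [OF assms(1,5), of x w]
    unfolding p_def s_def by force
  then have "x i \<in> closed_segment (x p) (x s)"
    by (rule interior_minimizer_dist_add_dist_in_closed_segment [OF interior])
  moreover have "p < m" "p \<noteq> i" "s < m" "s \<noteq> i"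
    using assms(1,5) Suc_mod_eq_iff_eq_pred_mod [of i m i] by (auto simp: p_def s_def mod_if)
  ultimately show False
    using general_position_closed_segment_disjoint [OF assms(2,5), of p "x p" s "x s"] assms(3,5)
    by auto
qed

lemma cINF_eq_if_dominated_by_subset:
  fixes f :: "'a \<Rightarrow> 'b::conditionally_complete_linorder"
  assumes "B \<subseteq> A" "A \<noteq> {}" "bdd_below (f ` A)" "\<And>x. x \<in> A \<Longrightarrow> \<exists>y\<in>B. f y \<le> f x"
  shows "(INF x\<in>A. f x) = (INF x\<in>B. f x)"
proof (rule antisym)
  have "B \<noteq> {}"
    using assms(2,4) by blast
  then show "(INF x\<in>A. f x) \<le> (INF x\<in>B. f x)"
    using assms(3,1) by (rule cINF_superset_mono) simp
  have "bdd_below (f ` B)"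
    using assms(1,3) by (meson bdd_below_mono image_mono)
  then show "(INF x\<in>B. f x) \<le> (INF x\<in>A. f x)"
    using assms(2,4) by (meson cINF_greatest cINF_lower order_trans)
qed

theorem mainTheorem3:
  fixes m :: nat and C :: "nat \<Rightarrow> 'a::euclidean_space set"
  assumes "m \<ge> 3"
    and "\<And>i. i < m \<Longrightarrow> C i \<noteq> {}"
    and "\<And>i. i < m \<Longrightarrow> closed (C i)"
    and "\<And>i. i < m \<Longrightarrow> convex (C i)"
    and "general_position m C"
  shows "(INF x\<in>{x. \<forall>i<m. x i \<in> C i}. cyc_len m x)
           = (INF x\<in>{x. \<forall>i<m. x i \<in> frontier (C i)}. cyc_len m x)
         \<and> (\<forall>xs. (\<forall>i<m. xs i \<in> C i) \<and>
               (\<forall>y. (\<forall>i<m. y i \<in> C i) \<longrightarrow> cyc_len m xs \<le> cyc_len m y)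
               \<longrightarrow> (\<forall>i<m. xs i \<in> frontier (C i)))"
proof (intro conjI allI impI)
  let ?A = "{x. \<forall>i<m. x i \<in> C i}" and ?B = "{x. \<forall>i<m. x i \<in> frontier (C i)}"
  have "2 \<le> m"
    using assms(1) by simp
  have "?B \<subseteq> ?A"
    using assms(3) frontier_subset_closed by blast
  moreover have "(\<lambda>i. SOME c. c \<in> C i) \<in> ?A"
    using assms(2) by (simp add: some_in_eq)
  moreover have "bdd_below (cyc_len m ` ?A)"
    using cyc_len_nonneg by (rule bdd_belowI2)
  moreover have "\<exists>y\<in>?B. cyc_len m y \<le> cyc_len m x" if "x \<in> ?A" for x
    using exists_frontier_config_cyc_len_le [OF \<open>2 \<le> m\<close> assms(5,3)] that by auto
  ultimately show "(INF x\<in>?A. cyc_len m x) = (INF x\<in>?B. cyc_len m x)"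
    by (intro cINF_eq_if_dominated_by_subset) auto
  show "xs i \<in> frontier (C i)"
    if "(\<forall>i<m. xs i \<in> C i) \<and> (\<forall>y. (\<forall>i<m. y i \<in> C i) \<longrightarrow> cyc_len m xs \<le> cyc_len m y)"
      and "i < m" for xs i
    using cyc_len_minimizer_in_frontier [OF \<open>2 \<le> m\<close> assms(5)] that by blast
qed

end
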